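(* Let $\mathcal C$ be a $\tau$-graded category with shifts and let $S$ be a homogeneous simple object. Put $L_S=\{a\in H: S\langle a\rangle\cong S \text{ (via a degree-1 isomorphism)}\}$. Then $L_S$ is a subgroup of $\ker(\tau)$. Fix coset representatives $(h_i)_{i\in I}$ with $H=\coprod_{i\in I}h_iL_S$, and let $H$ act on $I$ by $h_{ai}L_S=ah_iL_S$. For all $i\in I$, $a\in H$ the $R$-module $\mathrm{Hom}^a_{\mathcal C}(S\langle h_i\rangle,S\langle h_{ai}\rangle)$ is free of rank one; choose generators $f^a_{S,i}$ with $f^1_{S,i}=\mathrm{id}_{S\langle h_i\rangle}$. Then there is a unique function $\psi_S\colon H^2\to\mathrm{Hom}_{\mathrm{Set}}(H/L_S,R^\times)$ with $$f^{ab}_{S,i}=\psi_S(a,b)(h_iL_S)\cdot f^a_{S,bi}\circ f^b_{S,i}\quad\text{for all }a,b\in H,\ i\in I,$$ and $\psi_S$ is a normalised 2-cocycle.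
   Context: $R$ is a nonzero commutative ring, $H,G$ groups, $\tau\colon H\to G$ a homomorphism. A $\tau$-graded category is an $R$-linear category $\mathcal C$ with $\mathrm{Hom}(X,Y)=\bigoplus_{h\in H}\mathrm{Hom}^h(X,Y)$, identities of degree 1, composition $\mathrm{Hom}^{h'}\times\mathrm{Hom}^h\to\mathrm{Hom}^{h'h}$, such that the degree-1 subcategory $\mathcal C^1$ is $G$-graded (disjoint full subcategories $\mathcal C_g$, every object a finite direct sum of objects of the $\mathcal C_g$; objects of $\mathcal C_g$ are homogeneous, $|X|=g$) and $\mathrm{Hom}^h(X,Y)=0$ for homogeneous $X,Y$ unless $|Y|=\tau(h)|X|$. A shift of $X$ by $a\in H$ is an object $X\langle a\rangle$ with a degree-$a$ isomorphism $r_{X,a}\colon X\to X\langle a\rangle$; $\mathcal C$ has shifts if these exist for all $X,a$ (fix a choice). An object $S$ is simple if $\mathrm{End}_{\mathcal C^1}(S)\cong R$ as $R$-algebras. $\mathrm{Hom}_{\mathrm{Set}}(H/L,R^\times)$ is an abelian group under pointwise product with right $H$-action $(f\triangleleft h)(kL)=f(hkL)$; $1$ is the constant function; a normalised 2-cocycle is $\psi\colon H^2\to\mathrm{Hom}_{\mathrm{Set}}(H/L,R^\times)$ with $\psi(1,h)=\psi(h,1)=1$ and $\psi(b,c)\psi(ab,c)^{-1}\psi(a,bc)(\psi(a,b)\triangleleft c)^{-1}=1$. *)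

theory Defs
  imports "HOL-Algebra.Algebra"
begin

text \<open>A tau-graded R-linear category, represented by its homogeneous pieces inside
  the full Hom modules. Objects are all elements of type 'o.
  HomM U Y is the R-module Hom(U,Y); Hg U Y h is the submodule Hom^h(U,Y);
  cmp U Y Z g f is the composite g o f of f : U -> Y and g : Y -> Z;
  idm U is the identity; Hmg is the set of homogeneous objects (objects of some C_g)
  and odeg U is the degree |U| of a homogeneous object U.\<close>

record ('o, 'm, 'r, 'h, 'g) gcat =
  HomM :: "'o \<Rightarrow> 'o \<Rightarrow> ('r, 'm) module"
  Hg   :: "'o \<Rightarrow> 'o \<Rightarrow> 'h \<Rightarrow> 'm set"
  cmp :: "'o \<Rightarrow> 'o \<Rightarrow> 'o \<Rightarrow> 'm \<Rightarrow> 'm \<Rightarrow> 'm"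
  idm  :: "'o \<Rightarrow> 'm"
  Hmg  :: "'o set"
  odeg :: "'o \<Rightarrow> 'g"

definition R_linear_cat ::
  "('r, 'a) ring_scheme \<Rightarrow> ('o, 'm, 'r, 'h, 'g, 'z) gcat_scheme \<Rightarrow> bool" where
  "R_linear_cat R C \<longleftrightarrow>
     (\<forall>U Y. module R (HomM C U Y)) \<and>
     (\<forall>U. idm C U \<in> carrier (HomM C U U)) \<and>
     (\<forall>U Y Z f g. f \<in> carrier (HomM C U Y) \<longrightarrow> g \<in> carrier (HomM C Y Z) \<longrightarrow>
        cmp C U Y Z g f \<in> carrier (HomM C U Z)) \<and>
     (\<forall>W U Y Z f g k. f \<in> carrier (HomM C W U) \<longrightarrow> g \<in> carrier (HomM C U Y) \<longrightarrow>
        k \<in> carrier (HomM C Y Z) \<longrightarrow>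
        cmp C W Y Z k (cmp C W U Y g f) = cmp C W U Z (cmp C U Y Z k g) f) \<and>
     (\<forall>U Y f. f \<in> carrier (HomM C U Y) \<longrightarrow>
        cmp C U Y Y (idm C Y) f = f \<and> cmp C U U Y f (idm C U) = f) \<and>
     (\<forall>U Y Z f f' g. f \<in> carrier (HomM C U Y) \<longrightarrow> f' \<in> carrier (HomM C U Y) \<longrightarrow>
        g \<in> carrier (HomM C Y Z) \<longrightarrow>
        cmp C U Y Z g (f \<oplus>\<^bsub>HomM C U Y\<^esub> f') =
          cmp C U Y Z g f \<oplus>\<^bsub>HomM C U Z\<^esub> cmp C U Y Z g f') \<and>
     (\<forall>U Y Z f g g'. f \<in> carrier (HomM C U Y) \<longrightarrow> g \<in> carrier (HomM C Y Z) \<longrightarrow>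
        g' \<in> carrier (HomM C Y Z) \<longrightarrow>
        cmp C U Y Z (g \<oplus>\<^bsub>HomM C Y Z\<^esub> g') f =
          cmp C U Y Z g f \<oplus>\<^bsub>HomM C U Z\<^esub> cmp C U Y Z g' f) \<and>
     (\<forall>U Y Z f g r. f \<in> carrier (HomM C U Y) \<longrightarrow> g \<in> carrier (HomM C Y Z) \<longrightarrow>
        r \<in> carrier R \<longrightarrow>
        cmp C U Y Z g (r \<odot>\<^bsub>HomM C U Y\<^esub> f) = r \<odot>\<^bsub>HomM C U Z\<^esub> cmp C U Y Z g f \<and>
        cmp C U Y Z (r \<odot>\<^bsub>HomM C Y Z\<^esub> g) f = r \<odot>\<^bsub>HomM C U Z\<^esub> cmp C U Y Z g f)"

definition hom_direct_sum ::
  "('r, 'a) ring_scheme \<Rightarrow> ('h, 'b) monoid_scheme \<Rightarrow> ('o, 'm, 'r, 'h, 'g, 'z) gcat_scheme \<Rightarrow> bool" where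
  "hom_direct_sum R H C \<longleftrightarrow>
     (\<forall>U Y h. h \<in> carrier H \<longrightarrow> submodule (Hg C U Y h) R (HomM C U Y)) \<and>
     (\<forall>U Y f. f \<in> carrier (HomM C U Y) \<longrightarrow>
        (\<exists>F \<phi>. finite F \<and> F \<subseteq> carrier H \<and> (\<forall>h\<in>F. \<phi> h \<in> Hg C U Y h) \<and>
           f = finsum (HomM C U Y) \<phi> F)) \<and>
     (\<forall>U Y F \<phi>. finite F \<longrightarrow> F \<subseteq> carrier H \<longrightarrow> (\<forall>h\<in>F. \<phi> h \<in> Hg C U Y h) \<longrightarrow>
        finsum (HomM C U Y) \<phi> F = \<zero>\<^bsub>HomM C U Y\<^esub> \<longrightarrow> (\<forall>h\<in>F. \<phi> h = \<zero>\<^bsub>HomM C U Y\<^esub>))"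

definition deg1_direct_sum_of_homog ::
  "('h, 'b) monoid_scheme \<Rightarrow> ('o, 'm, 'r, 'h, 'g, 'z) gcat_scheme \<Rightarrow> 'o \<Rightarrow> bool" where
  "deg1_direct_sum_of_homog H C U \<longleftrightarrow>
     (\<exists>(n::nat) Y \<iota> \<pi>. (\<forall>k<n. Y k \<in> Hmg C \<and> \<iota> k \<in> Hg C (Y k) U \<one>\<^bsub>H\<^esub> \<and>
                                \<pi> k \<in> Hg C U (Y k) \<one>\<^bsub>H\<^esub>) \<and>
        (\<forall>j<n. \<forall>k<n. cmp C (Y k) U (Y j) (\<pi> j) (\<iota> k) =
            (if j = k then idm C (Y k) else \<zero>\<^bsub>HomM C (Y k) (Y j)\<^esub>)) \<and>
        finsum (HomM C U U) (\<lambda>k. cmp C U (Y k) U (\<iota> k) (\<pi> k)) {..<n} = idm C U)"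

definition tau_graded_cat ::
  "('r, 'a) ring_scheme \<Rightarrow> ('h, 'b) monoid_scheme \<Rightarrow> ('g, 'c) monoid_scheme \<Rightarrow> ('h \<Rightarrow> 'g)
     \<Rightarrow> ('o, 'm, 'r, 'h, 'g, 'z) gcat_scheme \<Rightarrow> bool" where
  "tau_graded_cat R H G \<tau> C \<longleftrightarrow>
     R_linear_cat R C \<and> hom_direct_sum R H C \<and>
     (\<forall>U. idm C U \<in> Hg C U U \<one>\<^bsub>H\<^esub>) \<and>
     (\<forall>U Y Z h h' f g. h \<in> carrier H \<longrightarrow> h' \<in> carrier H \<longrightarrow>
        f \<in> Hg C U Y h \<longrightarrow> g \<in> Hg C Y Z h' \<longrightarrow> cmp C U Y Z g f \<in> Hg C U Z (h' \<otimes>\<^bsub>H\<^esub> h)) \<and>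
     (\<forall>U\<in>Hmg C. odeg C U \<in> carrier G) \<and>
     (\<forall>U. deg1_direct_sum_of_homog H C U) \<and>
     (\<forall>U\<in>Hmg C. \<forall>Y\<in>Hmg C. \<forall>h\<in>carrier H.
        odeg C Y \<noteq> \<tau> h \<otimes>\<^bsub>G\<^esub> odeg C U \<longrightarrow> Hg C U Y h \<subseteq> {\<zero>\<^bsub>HomM C U Y\<^esub>})"

text \<open>f : U -> Y is an isomorphism of degree a (its inverse taken in the full category).\<close>
definition iso_deg ::
  "('o, 'm, 'r, 'h, 'g, 'z) gcat_scheme \<Rightarrow> 'h \<Rightarrow> 'o \<Rightarrow> 'o \<Rightarrow> 'm \<Rightarrow> bool" where
  "iso_deg C a U Y f \<longleftrightarrow> f \<in> Hg C U Y a \<and>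
     (\<exists>g \<in> carrier (HomM C Y U). cmp C U Y U g f = idm C U \<and> cmp C Y U Y f g = idm C Y)"

text \<open>A (fixed) choice of shifts: sh U a = U<a>, rs U a = r_{U,a}.\<close>
definition has_shifts ::
  "('h, 'b) monoid_scheme \<Rightarrow> ('o, 'm, 'r, 'h, 'g, 'z) gcat_scheme
     \<Rightarrow> ('o \<Rightarrow> 'h \<Rightarrow> 'o) \<Rightarrow> ('o \<Rightarrow> 'h \<Rightarrow> 'm) \<Rightarrow> bool" where
  "has_shifts H C sh rs \<longleftrightarrow> (\<forall>U. \<forall>a\<in>carrier H. iso_deg C a U (sh U a) (rs U a))"

definition simple_obj ::
  "('r, 'a) ring_scheme \<Rightarrow> ('h, 'b) monoid_scheme \<Rightarrow> ('o, 'm, 'r, 'h, 'g, 'z) gcat_scheme \<Rightarrow> 'o \<Rightarrow> bool" where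
  "simple_obj R H C S \<longleftrightarrow>
     (\<exists>\<phi>. bij_betw \<phi> (carrier R) (Hg C S S \<one>\<^bsub>H\<^esub>) \<and> \<phi> \<one>\<^bsub>R\<^esub> = idm C S \<and>
        (\<forall>r\<in>carrier R. \<forall>s\<in>carrier R.
           \<phi> (r \<oplus>\<^bsub>R\<^esub> s) = \<phi> r \<oplus>\<^bsub>HomM C S S\<^esub> \<phi> s \<and>
           \<phi> (r \<otimes>\<^bsub>R\<^esub> s) = cmp C S S S (\<phi> r) (\<phi> s) \<and>
           \<phi> (r \<otimes>\<^bsub>R\<^esub> s) = r \<odot>\<^bsub>HomM C S S\<^esub> \<phi> s))"

definition stab ::
  "('h, 'b) monoid_scheme \<Rightarrow> ('o, 'm, 'r, 'h, 'g, 'z) gcat_scheme \<Rightarrow> ('o \<Rightarrow> 'h \<Rightarrow> 'o) \<Rightarrow> 'o \<Rightarrow> 'h set" where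
  "stab H C sh S = {a \<in> carrier H. \<exists>f. iso_deg C \<one>\<^bsub>H\<^esub> (sh S a) S f}"

definition free_generator ::
  "('r, 'a) ring_scheme \<Rightarrow> ('r, 'm, 'c) module_scheme \<Rightarrow> 'm set \<Rightarrow> 'm \<Rightarrow> bool" where
  "free_generator R M N g \<longleftrightarrow> g \<in> N \<and> bij_betw (\<lambda>r. r \<odot>\<^bsub>M\<^esub> g) (carrier R) N"

definition left_cosets_of :: "('h, 'b) monoid_scheme \<Rightarrow> 'h set \<Rightarrow> 'h set set" where
  "left_cosets_of H L = {l_coset H x L | x. x \<in> carrier H}"

definition coset_reps :: "('h, 'b) monoid_scheme \<Rightarrow> 'h set \<Rightarrow> 'i set \<Rightarrow> ('i \<Rightarrow> 'h) \<Rightarrow> bool" where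
  "coset_reps H L I hr \<longleftrightarrow> (\<forall>i\<in>I. hr i \<in> carrier H) \<and>
     (\<forall>x\<in>carrier H. \<exists>!i. i \<in> I \<and> x \<in> l_coset H (hr i) L)"

definition coset_act :: "('h, 'b) monoid_scheme \<Rightarrow> 'h set \<Rightarrow> 'i set \<Rightarrow> ('i \<Rightarrow> 'h) \<Rightarrow> 'h \<Rightarrow> 'i \<Rightarrow> 'i" where
  "coset_act H L I hr a i = (THE j. j \<in> I \<and> l_coset H (hr j) L = l_coset H (a \<otimes>\<^bsub>H\<^esub> hr i) L)"

text \<open>psi : H^2 -> Hom_Set(H/L, R^x) is a normalised 2-cocycle; the right action is
  (f <| h)(kL) = f(hkL), i.e. (f <| h)(C) = f(h <# C).\<close>
definition normalised_2cocycle ::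
  "('r, 'a) ring_scheme \<Rightarrow> ('h, 'b) monoid_scheme \<Rightarrow> 'h set \<Rightarrow> ('h \<Rightarrow> 'h \<Rightarrow> 'h set \<Rightarrow> 'r) \<Rightarrow> bool" where
  "normalised_2cocycle R H L \<psi> \<longleftrightarrow>
     (\<forall>a\<in>carrier H. \<forall>b\<in>carrier H. \<forall>C\<in>left_cosets_of H L. \<psi> a b C \<in> Units R) \<and>
     (\<forall>h\<in>carrier H. \<forall>C\<in>left_cosets_of H L. \<psi> \<one>\<^bsub>H\<^esub> h C = \<one>\<^bsub>R\<^esub> \<and> \<psi> h \<one>\<^bsub>H\<^esub> C = \<one>\<^bsub>R\<^esub>) \<and>
     (\<forall>a\<in>carrier H. \<forall>b\<in>carrier H. \<forall>c\<in>carrier H. \<forall>C\<in>left_cosets_of H L.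
        \<psi> b c C \<otimes>\<^bsub>R\<^esub> inv\<^bsub>R\<^esub> (\<psi> (a \<otimes>\<^bsub>H\<^esub> b) c C) \<otimes>\<^bsub>R\<^esub> \<psi> a (b \<otimes>\<^bsub>H\<^esub> c) C
          \<otimes>\<^bsub>R\<^esub> inv\<^bsub>R\<^esub> (\<psi> a b (l_coset H c C)) = \<one>\<^bsub>R\<^esub>)"

end

theory Submission
  imports Defs
begin

text \<open>Shifting \<open>S\<close> by \<open>a\<close> is realised by an isomorphism of degree \<open>a\<close>, and
  \<open>h\<^bsub>a i\<^esub>\<inverse> a h\<^sub>i \<in> L\<^sub>S\<close>; hence \<open>Hom\<^sup>a(S\<langle>h\<^sub>i\<rangle>, S\<langle>h\<^bsub>a i\<^esub>\<rangle>)\<close> contains an isomorphism, and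
  composing with it identifies this module with \<open>End\<^sup>1(S\<langle>h\<^sub>i\<rangle>) \<cong> R\<close>. So it is free of rank
  one and all its generators are isomorphisms. In particular \<open>f\<^sup>a\<^bsub>S,b i\<^esub> \<circ> f\<^sup>b\<^bsub>S,i\<^esub>\<close> generates
  \<open>Hom\<^sup>a\<^sup>b\<close>, so \<open>f\<^sup>a\<^sup>b\<^bsub>S,i\<^esub>\<close> is a unit multiple of it; this defines \<open>\<psi>\<^sub>S\<close>. Expanding \<open>f\<^sup>a\<^sup>b\<^sup>c\<^bsub>S,i\<^esub>\<close>
  as a multiple of \<open>f\<^sup>a \<circ> f\<^sup>b \<circ> f\<^sup>c\<close> in the two possible ways gives the cocycle identity.
  Finally \<open>L\<^sub>S \<subseteq> ker \<tau>\<close> because a nonzero endomorphism of degree \<open>a\<close> of the homogeneous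
  object \<open>S\<close> forces \<open>\<tau>(a)|S| = |S|\<close>.\<close>

section \<open>Free modules of rank one\<close>

lemma free_generator_in: "free_generator R M N g \<Longrightarrow> g \<in> N"
  unfolding free_generator_def by blast

lemma free_generator_smult_inj:
  "free_generator R M N g \<Longrightarrow> r \<in> carrier R \<Longrightarrow> s \<in> carrier R \<Longrightarrow>
    r \<odot>\<^bsub>M\<^esub> g = s \<odot>\<^bsub>M\<^esub> g \<Longrightarrow> r = s"
  unfolding free_generator_def bij_betw_def inj_on_def by blast

lemma free_generator_coeff:
  assumes "free_generator R M N g" and "x \<in> N"
  obtains r where "r \<in> carrier R" and "x = r \<odot>\<^bsub>M\<^esub> g"
  using assms unfolding free_generator_def bij_betw_def by blast

lemma free_generator_transfer:
  assumes e: "free_generator R M N e"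
    and \<Phi>: "\<Phi> \<in> N \<rightarrow> N'" and \<Psi>: "\<Psi> \<in> N' \<rightarrow> N"
    and \<Psi>\<Phi>: "\<And>x. x \<in> N \<Longrightarrow> \<Psi> (\<Phi> x) = x" and \<Phi>\<Psi>: "\<And>y. y \<in> N' \<Longrightarrow> \<Phi> (\<Psi> y) = y"
    and linear: "\<And>r. r \<in> carrier R \<Longrightarrow> \<Phi> (r \<odot>\<^bsub>M\<^esub> e) = r \<odot>\<^bsub>M'\<^esub> \<Phi> e"
  shows "free_generator R M' N' (\<Phi> e)"
proof -
  have smult_in: "r \<odot>\<^bsub>M\<^esub> e \<in> N" if "r \<in> carrier R" for r
    using e that unfolding free_generator_def bij_betw_def by blast
  show ?thesis
    unfolding free_generator_def bij_betw_def
  proof (intro conjI inj_onI)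
    show "\<Phi> e \<in> N'" using \<Phi> free_generator_in[OF e] by blast
  next
    fix r s assume r: "r \<in> carrier R" and s: "s \<in> carrier R"
      and eq: "r \<odot>\<^bsub>M'\<^esub> \<Phi> e = s \<odot>\<^bsub>M'\<^esub> \<Phi> e"
    have "r \<odot>\<^bsub>M\<^esub> e = s \<odot>\<^bsub>M\<^esub> e"
      using \<Psi>\<Phi>[OF smult_in[OF r]] \<Psi>\<Phi>[OF smult_in[OF s]] eq linear r s by metis
    then show "r = s" using free_generator_smult_inj[OF e r s] by blast
  next
    show "(\<lambda>r. r \<odot>\<^bsub>M'\<^esub> \<Phi> e) ` carrier R = N'"
    proof
      show "(\<lambda>r. r \<odot>\<^bsub>M'\<^esub> \<Phi> e) ` carrier R \<subseteq> N'"
        using \<Phi> smult_in by (auto simp flip: linear)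
      show "N' \<subseteq> (\<lambda>r. r \<odot>\<^bsub>M'\<^esub> \<Phi> e) ` carrier R"
      proof
        fix y assume y: "y \<in> N'"
        obtain r where r: "r \<in> carrier R" "\<Psi> y = r \<odot>\<^bsub>M\<^esub> e"
          using free_generator_coeff[OF e] \<Psi> y by blast
        have "y = r \<odot>\<^bsub>M'\<^esub> \<Phi> e" using \<Phi>\<Psi>[OF y] r linear by metis
        then show "y \<in> (\<lambda>r. r \<odot>\<^bsub>M'\<^esub> \<Phi> e) ` carrier R" using r by blast
      qed
    qed
  qed
qed

lemma free_generator_coeff_unit:
  assumes M: "module R M" and N: "N \<subseteq> carrier M"
    and g: "free_generator R M N g" and k: "free_generator R M N k"
    and r: "r \<in> carrier R" and k_eq: "k = r \<odot>\<^bsub>M\<^esub> g"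
  shows "r \<in> Units R"
proof -
  interpret module R M by (rule M)
  obtain d where d: "d \<in> carrier R" "g = d \<odot>\<^bsub>M\<^esub> k"
    using free_generator_coeff[OF k free_generator_in[OF g]] by blast
  have "(r \<otimes>\<^bsub>R\<^esub> d) \<odot>\<^bsub>M\<^esub> k = \<one>\<^bsub>R\<^esub> \<odot>\<^bsub>M\<^esub> k"
    using k_eq d r free_generator_in[OF k] N by (auto simp: smult_assoc1)
  then have "r \<otimes>\<^bsub>R\<^esub> d = \<one>\<^bsub>R\<^esub>" using free_generator_smult_inj[OF k] r d by simp
  then show ?thesis using r d m_comm unfolding Units_def by auto
qed

lemma (in cring) Units_cross_ratio_eq_one:
  assumes "p \<in> Units R" "q \<in> Units R" "s \<in> Units R" "t \<in> Units R" and "q \<otimes> t = s \<otimes> p"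
  shows "p \<otimes> inv q \<otimes> s \<otimes> inv t = \<one>"
proof -
  have carrier: "p \<in> carrier R" "q \<in> carrier R" "s \<in> carrier R" "t \<in> carrier R"
    "inv q \<in> carrier R" "inv t \<in> carrier R"
    using assms by auto
  have "p \<otimes> inv q \<otimes> s \<otimes> inv t = (s \<otimes> p) \<otimes> (inv q \<otimes> inv t)"
    using carrier by (simp add: m_ac)
  also have "\<dots> = (q \<otimes> inv q) \<otimes> (t \<otimes> inv t)"
    using carrier by (simp add: m_ac flip: assms(5))
  finally show ?thesis using assms by simp
qed

section \<open>Graded categories\<close>

locale tau_graded_category =
  fixes R :: "('r, 'a) ring_scheme" and H :: "('h, 'b) monoid_scheme"
    and G :: "('g, 'c) monoid_scheme" and \<tau> :: "'h \<Rightarrow> 'g"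
    and C :: "('o, 'm, 'r, 'h, 'g, 'z) gcat_scheme"
  assumes cring: "cring R" and group: "group H" and graded: "tau_graded_cat R H G \<tau> C"
begin

lemma
  shows hom_module: "module R (HomM C U Y)"
    and idm_closed [simp]: "idm C U \<in> carrier (HomM C U U)"
    and cmp_closed [simp]: "f \<in> carrier (HomM C U Y) \<Longrightarrow> g \<in> carrier (HomM C Y Z) \<Longrightarrow>
      cmp C U Y Z g f \<in> carrier (HomM C U Z)"
    and cmp_assoc: "f \<in> carrier (HomM C W U) \<Longrightarrow> g \<in> carrier (HomM C U Y) \<Longrightarrow>
      k \<in> carrier (HomM C Y Z) \<Longrightarrow>
      cmp C W Y Z k (cmp C W U Y g f) = cmp C W U Z (cmp C U Y Z k g) f"
    and cmp_idm_left [simp]: "f \<in> carrier (HomM C U Y) \<Longrightarrow> cmp C U Y Y (idm C Y) f = f"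
    and cmp_idm_right [simp]: "f \<in> carrier (HomM C U Y) \<Longrightarrow> cmp C U U Y f (idm C U) = f"
    and cmp_add_left: "f \<in> carrier (HomM C U Y) \<Longrightarrow> g \<in> carrier (HomM C Y Z) \<Longrightarrow>
      g' \<in> carrier (HomM C Y Z) \<Longrightarrow>
      cmp C U Y Z (g \<oplus>\<^bsub>HomM C Y Z\<^esub> g') f = cmp C U Y Z g f \<oplus>\<^bsub>HomM C U Z\<^esub> cmp C U Y Z g' f"
    and cmp_smult_right: "f \<in> carrier (HomM C U Y) \<Longrightarrow> g \<in> carrier (HomM C Y Z) \<Longrightarrow>
      r \<in> carrier R \<Longrightarrow>
      cmp C U Y Z g (r \<odot>\<^bsub>HomM C U Y\<^esub> f) = r \<odot>\<^bsub>HomM C U Z\<^esub> cmp C U Y Z g f"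
    and cmp_smult_left: "f \<in> carrier (HomM C U Y) \<Longrightarrow> g \<in> carrier (HomM C Y Z) \<Longrightarrow>
      r \<in> carrier R \<Longrightarrow>
      cmp C U Y Z (r \<odot>\<^bsub>HomM C Y Z\<^esub> g) f = r \<odot>\<^bsub>HomM C U Z\<^esub> cmp C U Y Z g f"
  using graded unfolding tau_graded_cat_def R_linear_cat_def by auto

lemma
  shows Hg_submodule: "h \<in> carrier H \<Longrightarrow> submodule (Hg C U Y h) R (HomM C U Y)"
    and hom_decomp: "f \<in> carrier (HomM C U Y) \<Longrightarrow>
      \<exists>F \<phi>. finite F \<and> F \<subseteq> carrier H \<and> (\<forall>h\<in>F. \<phi> h \<in> Hg C U Y h) \<and>
        f = finsum (HomM C U Y) \<phi> F"
    and hom_decomp_zero: "finite F \<Longrightarrow> F \<subseteq> carrier H \<Longrightarrow> (\<forall>h\<in>F. \<phi> h \<in> Hg C U Y h) \<Longrightarrow>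
      finsum (HomM C U Y) \<phi> F = \<zero>\<^bsub>HomM C U Y\<^esub> \<Longrightarrow> h \<in> F \<Longrightarrow> \<phi> h = \<zero>\<^bsub>HomM C U Y\<^esub>"
  using graded unfolding tau_graded_cat_def hom_direct_sum_def by auto

lemma
  shows idm_deg [simp]: "idm C U \<in> Hg C U U \<one>\<^bsub>H\<^esub>"
    and cmp_deg: "h \<in> carrier H \<Longrightarrow> h' \<in> carrier H \<Longrightarrow> f \<in> Hg C U Y h \<Longrightarrow> g \<in> Hg C Y Z h' \<Longrightarrow>
      cmp C U Y Z g f \<in> Hg C U Z (h' \<otimes>\<^bsub>H\<^esub> h)"
    and odeg_closed: "U \<in> Hmg C \<Longrightarrow> odeg C U \<in> carrier G"
    and Hg_degree_mismatch: "U \<in> Hmg C \<Longrightarrow> Y \<in> Hmg C \<Longrightarrow> h \<in> carrier H \<Longrightarrow>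
      odeg C Y \<noteq> \<tau> h \<otimes>\<^bsub>G\<^esub> odeg C U \<Longrightarrow> Hg C U Y h \<subseteq> {\<zero>\<^bsub>HomM C U Y\<^esub>}"
  using graded unfolding tau_graded_cat_def by blast+

lemma Hg_closed: "h \<in> carrier H \<Longrightarrow> f \<in> Hg C U Y h \<Longrightarrow> f \<in> carrier (HomM C U Y)"
  using module.submoduleE(1)[OF hom_module Hg_submodule] by blast

lemma Hg_smult_closed:
  "h \<in> carrier H \<Longrightarrow> f \<in> Hg C U Y h \<Longrightarrow> r \<in> carrier R \<Longrightarrow> r \<odot>\<^bsub>HomM C U Y\<^esub> f \<in> Hg C U Y h"
  using module.submoduleE(4)[OF hom_module Hg_submodule] by blast

lemma Hg_minus_closed:
  "h \<in> carrier H \<Longrightarrow> f \<in> Hg C U Y h \<Longrightarrow> g \<in> Hg C U Y h \<Longrightarrow> f \<ominus>\<^bsub>HomM C U Y\<^esub> g \<in> Hg C U Y h"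
  using module.submoduleE(3,5)[OF hom_module Hg_submodule] unfolding a_minus_def by blast

lemma Hg_zero_closed: "h \<in> carrier H \<Longrightarrow> \<zero>\<^bsub>HomM C U Y\<^esub> \<in> Hg C U Y h"
proof -
  assume h: "h \<in> carrier H"
  interpret M: module R "HomM C U Y" by (rule hom_module)
  obtain x where x: "x \<in> Hg C U Y h" using M.submoduleE(2)[OF Hg_submodule[OF h]] by blast
  then have "x \<ominus>\<^bsub>HomM C U Y\<^esub> x \<in> Hg C U Y h" using Hg_minus_closed[OF h] by blast
  then show ?thesis using Hg_closed[OF h x] by (simp add: a_minus_def M.r_neg)
qed

lemma cmp_zero_left: "f \<in> carrier (HomM C U Y) \<Longrightarrow> cmp C U Y Z \<zero>\<^bsub>HomM C Y Z\<^esub> f = \<zero>\<^bsub>HomM C U Z\<^esub>"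
proof -
  assume f: "f \<in> carrier (HomM C U Y)"
  interpret M: module R "HomM C U Z" by (rule hom_module)
  interpret N: module R "HomM C Y Z" by (rule hom_module)
  have "cmp C U Y Z \<zero>\<^bsub>HomM C Y Z\<^esub> f = \<zero>\<^bsub>R\<^esub> \<odot>\<^bsub>HomM C U Z\<^esub> cmp C U Y Z \<zero>\<^bsub>HomM C Y Z\<^esub> f"
    using cmp_smult_left[OF f N.zero_closed, of "\<zero>\<^bsub>R\<^esub>"] by simp
  then show ?thesis using f by simp
qed

lemma cmp_finsum_left:
  assumes "finite F" and "\<phi> \<in> F \<rightarrow> carrier (HomM C Y Z)" and f: "f \<in> carrier (HomM C U Y)"
  shows "cmp C U Y Z (finsum (HomM C Y Z) \<phi> F) f = finsum (HomM C U Z) (\<lambda>h. cmp C U Y Z (\<phi> h) f) F"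
  using assms(1,2)
proof (induction F rule: finite_induct)
  case empty
  interpret M: module R "HomM C U Z" by (rule hom_module)
  interpret N: module R "HomM C Y Z" by (rule hom_module)
  show ?case using cmp_zero_left[OF f] by simp
next
  case (insert x F)
  interpret M: module R "HomM C U Z" by (rule hom_module)
  interpret N: module R "HomM C Y Z" by (rule hom_module)
  from insert show ?case
    using f by (simp add: cmp_add_left Pi_iff)
qed

lemma hom_decomp_with_degree:
  assumes f: "f \<in> carrier (HomM C U Y)" and k: "k \<in> carrier H"
  obtains F \<phi> where "k \<in> F" "finite F" "F \<subseteq> carrier H" "\<forall>h\<in>F. \<phi> h \<in> Hg C U Y h"
    "f = finsum (HomM C U Y) \<phi> F"
proof -
  interpret M: module R "HomM C U Y" by (rule hom_module)
  obtain F \<phi> where F: "finite F" "F \<subseteq> carrier H" "\<forall>h\<in>F. \<phi> h \<in> Hg C U Y h"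
    and f_eq: "f = finsum (HomM C U Y) \<phi> F"
    using hom_decomp[OF f] by blast
  define \<phi>' where "\<phi>' h = (if h \<in> F then \<phi> h else \<zero>\<^bsub>HomM C U Y\<^esub>)" for h
  have \<phi>': "\<forall>h\<in>insert k F. \<phi>' h \<in> Hg C U Y h"
    using F k Hg_zero_closed unfolding \<phi>'_def by auto
  have "finsum (HomM C U Y) \<phi> F = finsum (HomM C U Y) \<phi>' (insert k F)"
    using F \<phi>' k Hg_closed
    by (intro M.add.finprod_mono_neutral_cong_left) (auto simp: \<phi>'_def)
  then show ?thesis using that[of "insert k F" \<phi>'] F \<phi>' k f_eq by blast
qed

lemma homogeneous_component:
  assumes F: "finite F" "F \<subseteq> carrier H" and \<phi>: "\<forall>h\<in>F. \<phi> h \<in> Hg C U Y h"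
    and k: "k \<in> F" and x: "x \<in> Hg C U Y k" and sum: "finsum (HomM C U Y) \<phi> F = x"
  shows "\<phi> k = x"
proof -
  interpret M: module R "HomM C U Y" by (rule hom_module)
  define \<chi> where "\<chi> = \<phi>(k := \<phi> k \<ominus>\<^bsub>HomM C U Y\<^esub> x)"
  have k_carrier: "k \<in> carrier H" using F k by blast
  have \<chi>: "\<forall>h\<in>F. \<chi> h \<in> Hg C U Y h"
    using \<phi> Hg_minus_closed[OF k_carrier _ x] k unfolding \<chi>_def by auto
  have carrier: "\<phi> \<in> F \<rightarrow> carrier (HomM C U Y)" "x \<in> carrier (HomM C U Y)"
    using \<phi> F Hg_closed x k_carrier by blast+
  have "finsum (HomM C U Y) \<chi> (F - {k}) = finsum (HomM C U Y) \<phi> (F - {k})"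
    using carrier by (intro M.finsum_cong') (auto simp: \<chi>_def)
  then have "finsum (HomM C U Y) \<chi> F =
      (\<phi> k \<ominus>\<^bsub>HomM C U Y\<^esub> x) \<oplus>\<^bsub>HomM C U Y\<^esub> finsum (HomM C U Y) \<phi> (F - {k})"
    using F carrier k M.finsum_insert[of "F - {k}" k \<chi>] by (simp add: \<chi>_def Pi_iff insert_absorb)
  also have "\<dots> = finsum (HomM C U Y) \<phi> F \<ominus>\<^bsub>HomM C U Y\<^esub> x"
    using F carrier k M.finsum_insert[of "F - {k}" k \<phi>] by (simp add: Pi_iff insert_absorb a_minus_def M.a_ac)
  also have "\<dots> = \<zero>\<^bsub>HomM C U Y\<^esub>" using sum carrier by (simp add: a_minus_def M.r_neg)
  finally have "\<chi> k = \<zero>\<^bsub>HomM C U Y\<^esub>" using hom_decomp_zero[OF F \<chi>] k by blast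
  then have "\<phi> k \<oplus>\<^bsub>HomM C U Y\<^esub> \<ominus>\<^bsub>HomM C U Y\<^esub> x = \<zero>\<^bsub>HomM C U Y\<^esub>"
    unfolding \<chi>_def a_minus_def by simp
  then have "\<ominus>\<^bsub>HomM C U Y\<^esub> (\<ominus>\<^bsub>HomM C U Y\<^esub> x) = \<phi> k"
    using carrier k by (intro M.minus_equality) auto
  then show ?thesis using carrier by simp
qed

text \<open>Compose the homogeneous decomposition of the inverse with the isomorphism and compare
  the degree-one components of the identity.\<close>

lemma inverse_deg:
  assumes a: "a \<in> carrier H" and f: "f \<in> Hg C U Y a" and g: "g \<in> carrier (HomM C Y U)"
    and gf: "cmp C U Y U g f = idm C U" and fg: "cmp C Y U Y f g = idm C Y"
  shows "g \<in> Hg C Y U (inv\<^bsub>H\<^esub> a)"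
proof -
  interpret H: group H by (rule group)
  interpret M: module R "HomM C U U" by (rule hom_module)
  have f_carrier: "f \<in> carrier (HomM C U Y)" using Hg_closed[OF a f] .
  obtain F \<phi> where F: "inv\<^bsub>H\<^esub> a \<in> F" "finite F" "F \<subseteq> carrier H" "\<forall>h\<in>F. \<phi> h \<in> Hg C Y U h"
    and g_eq: "g = finsum (HomM C Y U) \<phi> F"
    using hom_decomp_with_degree[OF g H.inv_closed[OF a]] by metis
  have \<phi>_carrier: "\<phi> \<in> F \<rightarrow> carrier (HomM C Y U)" using F Hg_closed by blast
  let ?\<rho> = "\<lambda>h. h \<otimes>\<^bsub>H\<^esub> a"
  let ?\<psi> = "\<lambda>k. cmp C U Y U (\<phi> (k \<otimes>\<^bsub>H\<^esub> inv\<^bsub>H\<^esub> a)) f"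
  have \<rho>_inv: "h \<otimes>\<^bsub>H\<^esub> a \<otimes>\<^bsub>H\<^esub> inv\<^bsub>H\<^esub> a = h" if "h \<in> carrier H" for h
    using that a by (simp add: H.m_assoc)
  have \<rho>F: "finite (?\<rho> ` F)" "?\<rho> ` F \<subseteq> carrier H" using F a by auto
  have \<psi>_deg: "\<forall>k\<in>?\<rho> ` F. ?\<psi> k \<in> Hg C U U k"
  proof
    fix k assume "k \<in> ?\<rho> ` F"
    then obtain h where h: "h \<in> F" "k = h \<otimes>\<^bsub>H\<^esub> a" by blast
    then have "h \<in> carrier H" using F by blast
    then show "?\<psi> k \<in> Hg C U U k" using cmp_deg[OF a _ f, of h "\<phi> h"] F h \<rho>_inv by simp
  qed
  have one_in: "\<one>\<^bsub>H\<^esub> \<in> ?\<rho> ` F" using F(1) a by (metis H.l_inv image_eqI)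
  have "idm C U = finsum (HomM C U U) (\<lambda>h. cmp C U Y U (\<phi> h) f) F"
    using gf g_eq cmp_finsum_left[OF F(2) \<phi>_carrier f_carrier] by simp
  also have "\<dots> = finsum (HomM C U U) ?\<psi> (?\<rho> ` F)"
  proof -
    have "inj_on ?\<rho> F"
      using F(3) a by (intro inj_onI) (meson H.r_cancel subsetD)
    moreover have "?\<psi> \<in> ?\<rho> ` F \<rightarrow> carrier (HomM C U U)"
      using \<psi>_deg Hg_closed \<rho>F by blast
    ultimately have "finsum (HomM C U U) ?\<psi> (?\<rho> ` F) = finsum (HomM C U U) (\<lambda>h. ?\<psi> (?\<rho> h)) F"
      by (rule M.finsum_reindex[rotated])
    also have "\<dots> = finsum (HomM C U U) (\<lambda>h. cmp C U Y U (\<phi> h) f) F"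
      using F(3) \<rho>_inv \<phi>_carrier f_carrier by (intro M.finsum_cong') (auto simp: Pi_iff)
    finally show ?thesis by simp
  qed
  finally have "?\<psi> \<one>\<^bsub>H\<^esub> = idm C U"
    using homogeneous_component[OF \<rho>F \<psi>_deg one_in idm_deg] by simp
  then have inv_left: "cmp C U Y U (\<phi> (inv\<^bsub>H\<^esub> a)) f = idm C U" using a by simp
  have \<phi>_inv: "\<phi> (inv\<^bsub>H\<^esub> a) \<in> carrier (HomM C Y U)" using \<phi>_carrier F by blast
  have "g = cmp C Y U U (cmp C U Y U (\<phi> (inv\<^bsub>H\<^esub> a)) f) g" using inv_left g by simp
  also have "\<dots> = \<phi> (inv\<^bsub>H\<^esub> a)"
    using cmp_assoc[OF g f_carrier \<phi>_inv] fg \<phi>_inv by simp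
  finally show ?thesis using F by simp
qed

lemma iso_deg_closed: "iso_deg C a U Y f \<Longrightarrow> a \<in> carrier H \<Longrightarrow> f \<in> carrier (HomM C U Y)"
  unfolding iso_deg_def using Hg_closed by blast

lemma iso_deg_inverse:
  assumes f: "iso_deg C a U Y f" and a: "a \<in> carrier H"
  obtains g where "iso_deg C (inv\<^bsub>H\<^esub> a) Y U g"
    and "cmp C U Y U g f = idm C U" and "cmp C Y U Y f g = idm C Y"
proof -
  obtain g where g: "g \<in> carrier (HomM C Y U)" "cmp C U Y U g f = idm C U" "cmp C Y U Y f g = idm C Y"
    using f unfolding iso_deg_def by blast
  have "g \<in> Hg C Y U (inv\<^bsub>H\<^esub> a)"
    using inverse_deg[OF a _ g] f unfolding iso_deg_def by blast
  then have "iso_deg C (inv\<^bsub>H\<^esub> a) Y U g"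
    using g f iso_deg_closed[OF f a] unfolding iso_deg_def by blast
  then show ?thesis using that g by blast
qed

lemma iso_deg_idm: "iso_deg C \<one>\<^bsub>H\<^esub> U U (idm C U)"
  unfolding iso_deg_def by (intro conjI idm_deg bexI[of _ "idm C U"]) auto

lemma iso_deg_cmp:
  assumes f: "iso_deg C a U Y f" and g: "iso_deg C b Y Z g" and a: "a \<in> carrier H" and b: "b \<in> carrier H"
  shows "iso_deg C (b \<otimes>\<^bsub>H\<^esub> a) U Z (cmp C U Y Z g f)"
proof -
  obtain f' where f': "f' \<in> carrier (HomM C Y U)" "cmp C U Y U f' f = idm C U" "cmp C Y U Y f f' = idm C Y"
    using f unfolding iso_deg_def by blast
  obtain g' where g': "g' \<in> carrier (HomM C Z Y)" "cmp C Y Z Y g' g = idm C Y" "cmp C Z Y Z g g' = idm C Z"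
    using g unfolding iso_deg_def by blast
  have fc: "f \<in> carrier (HomM C U Y)" and gc: "g \<in> carrier (HomM C Y Z)"
    using iso_deg_closed f g a b by auto
  have "cmp C U Z U (cmp C Z Y U f' g') (cmp C U Y Z g f) = cmp C U Y U (cmp C Y Y U f' (cmp C Y Z Y g' g)) f"
    using cmp_assoc[OF fc gc, of "cmp C Z Y U f' g'"] cmp_assoc[OF gc g'(1) f'(1)] f' g' by simp
  then have left: "cmp C U Z U (cmp C Z Y U f' g') (cmp C U Y Z g f) = idm C U"
    using f' g' by simp
  have "cmp C Z U Z (cmp C U Y Z g f) (cmp C Z Y U f' g') = cmp C Z Y Z (cmp C Y Y Z g (cmp C Y U Y f f')) g'"
    using cmp_assoc[OF g'(1) f'(1), of "cmp C U Y Z g f"] cmp_assoc[OF f'(1) fc gc] fc gc by simp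
  then have right: "cmp C Z U Z (cmp C U Y Z g f) (cmp C Z Y U f' g') = idm C Z"
    using f' g' gc by simp
  have "cmp C U Y Z g f \<in> Hg C U Z (b \<otimes>\<^bsub>H\<^esub> a)"
    using cmp_deg[OF a b] f g unfolding iso_deg_def by blast
  then show ?thesis
    unfolding iso_deg_def using left right f' g' by (intro conjI bexI[of _ "cmp C Z Y U f' g'"]) auto
qed

lemma iso_deg_smult:
  assumes g: "iso_deg C a U Y g" and a: "a \<in> carrier H" and c: "c \<in> Units R"
  shows "iso_deg C a U Y (c \<odot>\<^bsub>HomM C U Y\<^esub> g)"
proof -
  interpret R: cring R by (rule cring)
  interpret N: module R "HomM C Y U" by (rule hom_module)
  obtain g' where g': "g' \<in> carrier (HomM C Y U)" "cmp C U Y U g' g = idm C U" "cmp C Y U Y g g' = idm C Y"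
    using g unfolding iso_deg_def by blast
  have gc: "g \<in> carrier (HomM C U Y)" using iso_deg_closed g a by auto
  have cc: "c \<in> carrier R" "inv\<^bsub>R\<^esub> c \<in> carrier R" "inv\<^bsub>R\<^esub> c \<otimes>\<^bsub>R\<^esub> c = \<one>\<^bsub>R\<^esub>"
    "c \<otimes>\<^bsub>R\<^esub> inv\<^bsub>R\<^esub> c = \<one>\<^bsub>R\<^esub>"
    using c by auto
  have "cmp C U Y U (inv\<^bsub>R\<^esub> c \<odot>\<^bsub>HomM C Y U\<^esub> g') (c \<odot>\<^bsub>HomM C U Y\<^esub> g) = idm C U"
    and "cmp C Y U Y (c \<odot>\<^bsub>HomM C U Y\<^esub> g) (inv\<^bsub>R\<^esub> c \<odot>\<^bsub>HomM C Y U\<^esub> g') = idm C Y"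
    using g' gc cc cmp_smult_left cmp_smult_right module.smult_one[OF hom_module]
      module.smult_closed[OF hom_module]
    by (simp_all add: module.smult_assoc1[OF hom_module, symmetric])
  moreover have "c \<odot>\<^bsub>HomM C U Y\<^esub> g \<in> Hg C U Y a"
    using Hg_smult_closed a g cc unfolding iso_deg_def by blast
  ultimately show ?thesis
    unfolding iso_deg_def using g' cc by (intro conjI bexI[of _ "inv\<^bsub>R\<^esub> c \<odot>\<^bsub>HomM C Y U\<^esub> g'"]) auto
qed

lemma free_generator_postcomp_iso:
  assumes e: "free_generator R (HomM C U Y) (Hg C U Y b) e" and g: "iso_deg C a Y Z g"
    and a: "a \<in> carrier H" and b: "b \<in> carrier H"
  shows "free_generator R (HomM C U Z) (Hg C U Z (a \<otimes>\<^bsub>H\<^esub> b)) (cmp C U Y Z g e)"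
proof -
  interpret H: group H by (rule group)
  obtain g' where g': "iso_deg C (inv\<^bsub>H\<^esub> a) Z Y g'" "cmp C Y Z Y g' g = idm C Y" "cmp C Z Y Z g g' = idm C Z"
    using iso_deg_inverse[OF g a] by blast
  have gc: "g \<in> carrier (HomM C Y Z)" and g'c: "g' \<in> carrier (HomM C Z Y)"
    using iso_deg_closed g g' a by auto
  have g_deg: "g \<in> Hg C Y Z a" and g'_deg: "g' \<in> Hg C Z Y (inv\<^bsub>H\<^esub> a)"
    using g g' unfolding iso_deg_def by blast+
  show ?thesis
  proof (rule free_generator_transfer[OF e, where \<Psi> = "cmp C U Z Y g'"])
    show "cmp C U Y Z g \<in> Hg C U Y b \<rightarrow> Hg C U Z (a \<otimes>\<^bsub>H\<^esub> b)"
      using cmp_deg[OF b a _ g_deg] by blast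
    show "cmp C U Z Y g' \<in> Hg C U Z (a \<otimes>\<^bsub>H\<^esub> b) \<rightarrow> Hg C U Y b"
      using cmp_deg[OF _ _ _ g'_deg, of "a \<otimes>\<^bsub>H\<^esub> b"] a b by (auto simp: H.m_assoc[symmetric])
    show "cmp C U Z Y g' (cmp C U Y Z g x) = x" if "x \<in> Hg C U Y b" for x
      using cmp_assoc[OF Hg_closed[OF b that] gc g'c] g' Hg_closed[OF b that] by simp
    show "cmp C U Y Z g (cmp C U Z Y g' y) = y" if "y \<in> Hg C U Z (a \<otimes>\<^bsub>H\<^esub> b)" for y
      using cmp_assoc[OF Hg_closed[OF _ that] g'c gc] g' Hg_closed[OF _ that] a b by simp
    show "cmp C U Y Z g (r \<odot>\<^bsub>HomM C U Y\<^esub> e) = r \<odot>\<^bsub>HomM C U Z\<^esub> cmp C U Y Z g e"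
      if "r \<in> carrier R" for r
      using cmp_smult_right[OF Hg_closed[OF b free_generator_in[OF e]] gc that] .
  qed
qed

lemma free_generator_precomp_iso:
  assumes e: "free_generator R (HomM C U Y) (Hg C U Y b) e" and g: "iso_deg C a W U g"
    and a: "a \<in> carrier H" and b: "b \<in> carrier H"
  shows "free_generator R (HomM C W Y) (Hg C W Y (b \<otimes>\<^bsub>H\<^esub> a)) (cmp C W U Y e g)"
proof -
  interpret H: group H by (rule group)
  obtain g' where g': "iso_deg C (inv\<^bsub>H\<^esub> a) U W g'" "cmp C W U W g' g = idm C W" "cmp C U W U g g' = idm C U"
    using iso_deg_inverse[OF g a] by blast
  have gc: "g \<in> carrier (HomM C W U)" and g'c: "g' \<in> carrier (HomM C U W)"
    using iso_deg_closed g g' a by auto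
  have g_deg: "g \<in> Hg C W U a" and g'_deg: "g' \<in> Hg C U W (inv\<^bsub>H\<^esub> a)"
    using g g' unfolding iso_deg_def by blast+
  show ?thesis
  proof (rule free_generator_transfer[OF e, where \<Phi> = "\<lambda>x. cmp C W U Y x g" and \<Psi> = "\<lambda>y. cmp C U W Y y g'"])
    show "(\<lambda>x. cmp C W U Y x g) \<in> Hg C U Y b \<rightarrow> Hg C W Y (b \<otimes>\<^bsub>H\<^esub> a)"
      using cmp_deg[OF a b g_deg] by blast
    show "(\<lambda>y. cmp C U W Y y g') \<in> Hg C W Y (b \<otimes>\<^bsub>H\<^esub> a) \<rightarrow> Hg C U Y b"
      using cmp_deg[OF _ _ g'_deg, of "b \<otimes>\<^bsub>H\<^esub> a"] a b by (auto simp: H.m_assoc)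
    show "cmp C U W Y (cmp C W U Y x g) g' = x" if "x \<in> Hg C U Y b" for x
      using cmp_assoc[OF g'c gc Hg_closed[OF b that]] g' Hg_closed[OF b that] by simp
    show "cmp C W U Y (cmp C U W Y y g') g = y" if "y \<in> Hg C W Y (b \<otimes>\<^bsub>H\<^esub> a)" for y
      using cmp_assoc[OF gc g'c Hg_closed[OF _ that]] g' Hg_closed[OF _ that] a b by simp
    show "cmp C W U Y (r \<odot>\<^bsub>HomM C U Y\<^esub> e) g = r \<odot>\<^bsub>HomM C W Y\<^esub> cmp C W U Y e g"
      if "r \<in> carrier R" for r
      using cmp_smult_left[OF gc Hg_closed[OF b free_generator_in[OF e]] that] .
  qed
qed

lemma iso_deg_free_generator:
  assumes U: "free_generator R (HomM C U U) (Hg C U U \<one>\<^bsub>H\<^esub>) (idm C U)"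
    and g: "iso_deg C a U Y g" and a: "a \<in> carrier H"
  shows "free_generator R (HomM C U Y) (Hg C U Y a) g"
proof -
  interpret H: group H by (rule group)
  show ?thesis
    using free_generator_postcomp_iso[OF U g a H.one_closed] iso_deg_closed[OF g a] a by simp
qed

lemma idm_free_generator_iso:
  assumes U: "free_generator R (HomM C U U) (Hg C U U \<one>\<^bsub>H\<^esub>) (idm C U)"
    and g: "iso_deg C a U Y g" and a: "a \<in> carrier H"
  shows "free_generator R (HomM C Y Y) (Hg C Y Y \<one>\<^bsub>H\<^esub>) (idm C Y)"
proof -
  interpret H: group H by (rule group)
  obtain g' where g': "iso_deg C (inv\<^bsub>H\<^esub> a) Y U g'" "cmp C Y U Y g g' = idm C Y"
    using iso_deg_inverse[OF g a] by metis
  show ?thesis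
    using free_generator_precomp_iso[OF iso_deg_free_generator[OF U g a] g'(1) H.inv_closed[OF a] a] g' a
    by simp
qed

lemma free_generator_iso_deg:
  assumes U: "free_generator R (HomM C U U) (Hg C U U \<one>\<^bsub>H\<^esub>) (idm C U)"
    and g: "iso_deg C a U Y g" and a: "a \<in> carrier H"
    and k: "free_generator R (HomM C U Y) (Hg C U Y a) k"
  shows "iso_deg C a U Y k"
proof -
  have g_gen: "free_generator R (HomM C U Y) (Hg C U Y a) g" by (rule iso_deg_free_generator[OF U g a])
  obtain c where c: "c \<in> carrier R" "k = c \<odot>\<^bsub>HomM C U Y\<^esub> g"
    using free_generator_coeff[OF g_gen free_generator_in[OF k]] by blast
  have "c \<in> Units R"
    using free_generator_coeff_unit[OF hom_module _ g_gen k c] Hg_closed[OF a] by blast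
  then show ?thesis using iso_deg_smult[OF g a] c by simp
qed

end

section \<open>Shifts of a simple object\<close>

locale graded_simple_object = tau_graded_category +
  fixes sh :: "'o \<Rightarrow> 'h \<Rightarrow> 'o" and rs :: "'o \<Rightarrow> 'h \<Rightarrow> 'm" and S :: 'o
  assumes nontrivial: "\<one>\<^bsub>R\<^esub> \<noteq> \<zero>\<^bsub>R\<^esub>" and group_G: "group G" and \<tau>_hom: "\<tau> \<in> hom H G"
    and shifts: "has_shifts H C sh rs" and S_homogeneous: "S \<in> Hmg C" and S_simple: "simple_obj R H C S"
begin

lemma idm_free_generator_simple: "free_generator R (HomM C S S) (Hg C S S \<one>\<^bsub>H\<^esub>) (idm C S)"
proof -
  interpret R: cring R by (rule cring)
  obtain \<phi> where \<phi>: "bij_betw \<phi> (carrier R) (Hg C S S \<one>\<^bsub>H\<^esub>)" "\<phi> \<one>\<^bsub>R\<^esub> = idm C S"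
    "\<forall>r\<in>carrier R. \<forall>s\<in>carrier R. \<phi> (r \<otimes>\<^bsub>R\<^esub> s) = r \<odot>\<^bsub>HomM C S S\<^esub> \<phi> s"
    using S_simple unfolding simple_obj_def by blast
  have "\<phi> r = r \<odot>\<^bsub>HomM C S S\<^esub> idm C S" if r: "r \<in> carrier R" for r
  proof -
    have "\<phi> (r \<otimes>\<^bsub>R\<^esub> \<one>\<^bsub>R\<^esub>) = r \<odot>\<^bsub>HomM C S S\<^esub> \<phi> \<one>\<^bsub>R\<^esub>" using \<phi>(3) r by blast
    then show ?thesis using r \<phi>(2) by simp
  qed
  then have "bij_betw (\<lambda>r. r \<odot>\<^bsub>HomM C S S\<^esub> idm C S) (carrier R) (Hg C S S \<one>\<^bsub>H\<^esub>)"
    using \<phi>(1) bij_betw_cong[of "carrier R" \<phi>] by metis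
  then show ?thesis unfolding free_generator_def by simp
qed

lemma shift_iso: "a \<in> carrier H \<Longrightarrow> iso_deg C a U (sh U a) (rs U a)"
  using shifts unfolding has_shifts_def by blast

lemma stab_eq_automorphism_degrees: "stab H C sh S = {a \<in> carrier H. \<exists>u. iso_deg C a S S u}"
proof -
  interpret H: group H by (rule group)
  have "(\<exists>f. iso_deg C \<one>\<^bsub>H\<^esub> (sh S a) S f) \<longleftrightarrow> (\<exists>u. iso_deg C a S S u)" if a: "a \<in> carrier H" for a
  proof
    assume "\<exists>f. iso_deg C \<one>\<^bsub>H\<^esub> (sh S a) S f"
    then obtain f where "iso_deg C \<one>\<^bsub>H\<^esub> (sh S a) S f" by blast
    from iso_deg_cmp[OF shift_iso[OF a] this a H.one_closed] a show "\<exists>u. iso_deg C a S S u" by auto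
  next
    assume "\<exists>u. iso_deg C a S S u"
    then obtain u where u: "iso_deg C a S S u" by blast
    obtain r' where "iso_deg C (inv\<^bsub>H\<^esub> a) (sh S a) S r'"
      using iso_deg_inverse[OF shift_iso[OF a] a] by metis
    from iso_deg_cmp[OF this u H.inv_closed[OF a] a] a
    show "\<exists>f. iso_deg C \<one>\<^bsub>H\<^esub> (sh S a) S f" by auto
  qed
  then show ?thesis unfolding stab_def by blast
qed

lemma stab_subgroup: "subgroup (stab H C sh S) H"
proof -
  interpret H: group H by (rule group)
  show ?thesis unfolding stab_eq_automorphism_degrees
  proof (rule H.subgroupI)
    show "{a \<in> carrier H. \<exists>u. iso_deg C a S S u} \<noteq> {}" using iso_deg_idm by blast
  next
    fix a assume "a \<in> {a \<in> carrier H. \<exists>u. iso_deg C a S S u}"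
    then obtain u where a: "a \<in> carrier H" and u: "iso_deg C a S S u" by blast
    obtain u' where "iso_deg C (inv\<^bsub>H\<^esub> a) S S u'" using iso_deg_inverse[OF u a] by metis
    then show "inv\<^bsub>H\<^esub> a \<in> {a \<in> carrier H. \<exists>u. iso_deg C a S S u}" using a by auto
  next
    fix a b assume "a \<in> {a \<in> carrier H. \<exists>u. iso_deg C a S S u}" "b \<in> {a \<in> carrier H. \<exists>u. iso_deg C a S S u}"
    then obtain u v where a: "a \<in> carrier H" "iso_deg C a S S u" and b: "b \<in> carrier H" "iso_deg C b S S v"
      by blast
    show "a \<otimes>\<^bsub>H\<^esub> b \<in> {a \<in> carrier H. \<exists>u. iso_deg C a S S u}"
      using iso_deg_cmp[OF b(2) a(2) b(1) a(1)] a b by auto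
  qed auto
qed

lemma stab_subset_kernel: "stab H C sh S \<subseteq> kernel H G \<tau>"
proof
  interpret G: group G by (rule group_G)
  interpret M: module R "HomM C S S" by (rule hom_module)
  fix a assume "a \<in> stab H C sh S"
  then obtain u where a: "a \<in> carrier H" and u: "iso_deg C a S S u"
    unfolding stab_eq_automorphism_degrees by blast
  obtain u' where u': "u' \<in> carrier (HomM C S S)" "cmp C S S S u u' = idm C S"
    using u unfolding iso_deg_def by blast
  have "idm C S \<noteq> \<zero>\<^bsub>HomM C S S\<^esub>"
    using free_generator_smult_inj[OF idm_free_generator_simple, of "\<one>\<^bsub>R\<^esub>" "\<zero>\<^bsub>R\<^esub>"] nontrivial by auto
  then have "u \<notin> {\<zero>\<^bsub>HomM C S S\<^esub>}" using u'(2) cmp_zero_left[OF u'(1)] by auto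
  then have "odeg C S = \<tau> a \<otimes>\<^bsub>G\<^esub> odeg C S"
    using Hg_degree_mismatch[OF S_homogeneous S_homogeneous a] u unfolding iso_deg_def by blast
  moreover have "\<tau> a \<in> carrier G" using \<tau>_hom a unfolding hom_def by blast
  ultimately have "\<tau> a = \<one>\<^bsub>G\<^esub>"
    using odeg_closed[OF S_homogeneous] G.r_cancel[of "odeg C S" "\<tau> a" "\<one>\<^bsub>G\<^esub>"] by simp
  then show "a \<in> kernel H G \<tau>" unfolding kernel_def using a by simp
qed

lemma idm_free_generator_shift:
  assumes "a \<in> carrier H"
  shows "free_generator R (HomM C (sh S a) (sh S a)) (Hg C (sh S a) (sh S a) \<one>\<^bsub>H\<^esub>) (idm C (sh S a))"
  using idm_free_generator_iso[OF idm_free_generator_simple shift_iso[OF assms] assms] .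

lemma shift_iso_exists:
  assumes x: "x \<in> carrier H" and y: "y \<in> carrier H" and a: "a \<in> carrier H"
    and stab: "inv\<^bsub>H\<^esub> y \<otimes>\<^bsub>H\<^esub> (a \<otimes>\<^bsub>H\<^esub> x) \<in> stab H C sh S"
  shows "\<exists>g. iso_deg C a (sh S x) (sh S y) g"
proof -
  interpret H: group H by (rule group)
  let ?l = "inv\<^bsub>H\<^esub> y \<otimes>\<^bsub>H\<^esub> (a \<otimes>\<^bsub>H\<^esub> x)"
  obtain u where l: "?l \<in> carrier H" and u: "iso_deg C ?l S S u"
    using stab unfolding stab_eq_automorphism_degrees by blast
  obtain r' where r': "iso_deg C (inv\<^bsub>H\<^esub> x) (sh S x) S r'"
    using iso_deg_inverse[OF shift_iso[OF x] x] by metis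
  have "iso_deg C (y \<otimes>\<^bsub>H\<^esub> (?l \<otimes>\<^bsub>H\<^esub> inv\<^bsub>H\<^esub> x)) (sh S x) (sh S y)
      (cmp C (sh S x) S (sh S y) (rs S y) (cmp C (sh S x) S S u r'))"
    using iso_deg_cmp[OF iso_deg_cmp[OF r' u H.inv_closed[OF x] l] shift_iso[OF y] _ y] x l by blast
  moreover have "y \<otimes>\<^bsub>H\<^esub> (?l \<otimes>\<^bsub>H\<^esub> inv\<^bsub>H\<^esub> x) = a"
    using x y a by (simp add: H.m_assoc[symmetric]) (simp add: H.m_assoc)
  ultimately show ?thesis by auto
qed

end

section \<open>Coset representatives\<close>

locale coset_representatives =
  fixes H :: "('h, 'b) monoid_scheme" and L :: "'h set" and I :: "'i set" and hr :: "'i \<Rightarrow> 'h"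
  assumes group: "group H" and subgroup: "subgroup L H" and reps: "coset_reps H L I hr"
begin

abbreviation act :: "'h \<Rightarrow> 'i \<Rightarrow> 'i" where "act \<equiv> coset_act H L I hr"

lemma rep_closed: "i \<in> I \<Longrightarrow> hr i \<in> carrier H"
  using reps unfolding coset_reps_def by blast

lemma l_coset_eq_iff:
  assumes "x \<in> carrier H" "y \<in> carrier H"
  shows "l_coset H x L = l_coset H y L \<longleftrightarrow> x \<in> l_coset H y L"
  using group.lcos_self[OF group assms(1) subgroup] group.l_repr_independence[OF group _ assms(2) subgroup]
  by metis

lemma rep_coset_inj: "i \<in> I \<Longrightarrow> j \<in> I \<Longrightarrow> l_coset H (hr i) L = l_coset H (hr j) L \<Longrightarrow> i = j"
  using reps group.lcos_self[OF group rep_closed subgroup] unfolding coset_reps_def by metis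

lemma coset_rep_exists:
  assumes "x \<in> carrier H"
  obtains j where "j \<in> I" "l_coset H (hr j) L = l_coset H x L"
  using reps assms l_coset_eq_iff[OF assms rep_closed] unfolding coset_reps_def by metis

lemma act_eqI:
  assumes "j \<in> I" "l_coset H (hr j) L = l_coset H (a \<otimes>\<^bsub>H\<^esub> hr i) L"
  shows "act a i = j"
  unfolding coset_act_def using assms rep_coset_inj by (intro the_equality) auto

lemma act_closed_coset:
  assumes i: "i \<in> I" and a: "a \<in> carrier H"
  shows "act a i \<in> I" and "l_coset H (hr (act a i)) L = l_coset H (a \<otimes>\<^bsub>H\<^esub> hr i) L"
proof -
  interpret H: group H by (rule group)
  have "a \<otimes>\<^bsub>H\<^esub> hr i \<in> carrier H" using a rep_closed[OF i] by simp
  then obtain j where "j \<in> I" "l_coset H (hr j) L = l_coset H (a \<otimes>\<^bsub>H\<^esub> hr i) L"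
    by (rule coset_rep_exists)
  then show "act a i \<in> I" and "l_coset H (hr (act a i)) L = l_coset H (a \<otimes>\<^bsub>H\<^esub> hr i) L"
    using act_eqI by auto
qed

lemmas act_closed = act_closed_coset(1) and act_coset = act_closed_coset(2)

lemma l_coset_act: "i \<in> I \<Longrightarrow> c \<in> carrier H \<Longrightarrow> l_coset H c (l_coset H (hr i) L) = l_coset H (hr (act c i)) L"
  using group.lcos_m_assoc[OF group subgroup.subset[OF subgroup] _ rep_closed] act_coset by metis

lemma act_mult:
  assumes a: "a \<in> carrier H" and b: "b \<in> carrier H" and i: "i \<in> I"
  shows "act (a \<otimes>\<^bsub>H\<^esub> b) i = act a (act b i)"
proof -
  interpret H: group H by (rule group)
  have "l_coset H (hr (act a (act b i))) L = l_coset H a (l_coset H b (l_coset H (hr i) L))"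
    using l_coset_act act_closed a b i by metis
  also have "\<dots> = l_coset H (a \<otimes>\<^bsub>H\<^esub> b \<otimes>\<^bsub>H\<^esub> hr i) L"
    using H.lcos_m_assoc subgroup.subset[OF subgroup] a b rep_closed[OF i] by (simp add: H.m_assoc)
  finally show ?thesis using act_eqI act_closed a b i by metis
qed

lemma act_one: "i \<in> I \<Longrightarrow> act \<one>\<^bsub>H\<^esub> i = i"
  using act_eqI rep_closed group.is_monoid[OF group] monoid.l_one by metis

lemma left_cosets_of_reps: "left_cosets_of H L = (\<lambda>i. l_coset H (hr i) L) ` I"
proof
  show "left_cosets_of H L \<subseteq> (\<lambda>i. l_coset H (hr i) L) ` I"
    unfolding left_cosets_of_def by (auto elim!: coset_rep_exists)
  show "(\<lambda>i. l_coset H (hr i) L) ` I \<subseteq> left_cosets_of H L"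
    unfolding left_cosets_of_def using rep_closed by blast
qed

lemma act_rep_inv_mult_mem:
  assumes i: "i \<in> I" and a: "a \<in> carrier H"
  shows "inv\<^bsub>H\<^esub> (hr (act a i)) \<otimes>\<^bsub>H\<^esub> (a \<otimes>\<^bsub>H\<^esub> hr i) \<in> L"
proof -
  interpret H: group H by (rule group)
  have "a \<otimes>\<^bsub>H\<^esub> hr i \<in> l_coset H (hr (act a i)) L"
    using act_coset[OF i a] H.lcos_self[OF _ subgroup] a rep_closed[OF i] by auto
  then show ?thesis
    using subgroup.lcos_module_imp[OF subgroup group] rep_closed[OF act_closed[OF i a]] by blast
qed

end

section \<open>The cocycle of a family of generators\<close>

locale shift_orbit =
  graded_simple_object R H G \<tau> C sh rs S +
  coset_representatives H "stab H C sh S" I hr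
  for R :: "('r, 'a) ring_scheme" and H :: "('h, 'b) monoid_scheme"
    and G :: "('g, 'c) monoid_scheme" and \<tau> :: "'h \<Rightarrow> 'g"
    and C :: "('o, 'm, 'r, 'h, 'g, 'z) gcat_scheme"
    and sh :: "'o \<Rightarrow> 'h \<Rightarrow> 'o" and rs :: "'o \<Rightarrow> 'h \<Rightarrow> 'm" and S :: 'o
    and I :: "'i set" and hr :: "'i \<Rightarrow> 'h"
begin

abbreviation L\<^sub>S :: "'h set" where "L\<^sub>S \<equiv> stab H C sh S"

abbreviation ob :: "'i \<Rightarrow> 'o" where "ob i \<equiv> sh S (hr i)"

lemma orbit_iso_exists: "i \<in> I \<Longrightarrow> a \<in> carrier H \<Longrightarrow> \<exists>g. iso_deg C a (ob i) (ob (act a i)) g"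
  using shift_iso_exists[OF rep_closed rep_closed[OF act_closed] _ act_rep_inv_mult_mem] by blast

lemma orbit_free_generator_exists:
  assumes i: "i \<in> I" and a: "a \<in> carrier H"
  shows "\<exists>g. free_generator R (HomM C (ob i) (ob (act a i))) (Hg C (ob i) (ob (act a i)) a) g"
  using orbit_iso_exists[OF i a] iso_deg_free_generator[OF idm_free_generator_shift[OF rep_closed[OF i]] _ a]
  by blast

abbreviation normalised_generators :: "('h \<Rightarrow> 'i \<Rightarrow> 'm) \<Rightarrow> bool" where
  "normalised_generators f \<equiv>
    (\<forall>i\<in>I. \<forall>a\<in>carrier H. free_generator R (HomM C (ob i) (ob (act a i))) (Hg C (ob i) (ob (act a i)) a) (f a i)) \<and>
    (\<forall>i\<in>I. f \<one>\<^bsub>H\<^esub> i = idm C (ob i))"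

abbreviation cocycle_relation :: "('h \<Rightarrow> 'i \<Rightarrow> 'm) \<Rightarrow> ('h \<Rightarrow> 'h \<Rightarrow> 'h set \<Rightarrow> 'r) \<Rightarrow> bool" where
  "cocycle_relation f \<psi> \<equiv> \<forall>a\<in>carrier H. \<forall>b\<in>carrier H. \<forall>i\<in>I.
    f (a \<otimes>\<^bsub>H\<^esub> b) i = \<psi> a b (l_coset H (hr i) L\<^sub>S) \<odot>\<^bsub>HomM C (ob i) (ob (act (a \<otimes>\<^bsub>H\<^esub> b) i))\<^esub>
      cmp C (ob i) (ob (act b i)) (ob (act a (act b i))) (f a (act b i)) (f b i)"

abbreviation unit_valued :: "('h \<Rightarrow> 'h \<Rightarrow> 'h set \<Rightarrow> 'r) \<Rightarrow> bool" where
  "unit_valued \<psi> \<equiv> \<forall>a\<in>carrier H. \<forall>b\<in>carrier H. \<forall>D\<in>left_cosets_of H L\<^sub>S. \<psi> a b D \<in> Units R"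

end

locale generator_family = shift_orbit R H G \<tau> C sh rs S I hr
  for R :: "('r, 'a) ring_scheme" and H :: "('h, 'b) monoid_scheme"
    and G :: "('g, 'c) monoid_scheme" and \<tau> :: "'h \<Rightarrow> 'g"
    and C :: "('o, 'm, 'r, 'h, 'g, 'z) gcat_scheme"
    and sh :: "'o \<Rightarrow> 'h \<Rightarrow> 'o" and rs :: "'o \<Rightarrow> 'h \<Rightarrow> 'm" and S :: 'o
    and I :: "'i set" and hr :: "'i \<Rightarrow> 'h" +
  fixes f :: "'h \<Rightarrow> 'i \<Rightarrow> 'm"
  assumes f_free_generator: "\<And>i a. i \<in> I \<Longrightarrow> a \<in> carrier H \<Longrightarrow>
      free_generator R (HomM C (ob i) (ob (act a i))) (Hg C (ob i) (ob (act a i)) a) (f a i)"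
    and f_one: "\<And>i. i \<in> I \<Longrightarrow> f \<one>\<^bsub>H\<^esub> i = idm C (ob i)"
begin

lemma f_iso:
  assumes i: "i \<in> I" and a: "a \<in> carrier H"
  shows "iso_deg C a (ob i) (ob (act a i)) (f a i)"
proof -
  obtain g where "iso_deg C a (ob i) (ob (act a i)) g" using orbit_iso_exists[OF i a] by blast
  from free_generator_iso_deg[OF idm_free_generator_shift[OF rep_closed[OF i]] this a f_free_generator[OF i a]]
  show ?thesis .
qed

lemma f_closed: "i \<in> I \<Longrightarrow> a \<in> carrier H \<Longrightarrow> f a i \<in> carrier (HomM C (ob i) (ob (act a i)))"
  using iso_deg_closed f_iso by blast

abbreviation fcomp :: "'h \<Rightarrow> 'h \<Rightarrow> 'i \<Rightarrow> 'm" where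
  "fcomp a b i \<equiv> cmp C (ob i) (ob (act b i)) (ob (act a (act b i))) (f a (act b i)) (f b i)"

lemma fcomp_iso:
  assumes a: "a \<in> carrier H" and b: "b \<in> carrier H" and i: "i \<in> I"
  shows "iso_deg C (a \<otimes>\<^bsub>H\<^esub> b) (ob i) (ob (act a (act b i))) (fcomp a b i)"
  using iso_deg_cmp[OF f_iso[OF i b] f_iso[OF act_closed[OF i b] a] b a] .

lemma fcomp_closed:
  "a \<in> carrier H \<Longrightarrow> b \<in> carrier H \<Longrightarrow> i \<in> I \<Longrightarrow>
    fcomp a b i \<in> carrier (HomM C (ob i) (ob (act a (act b i))))"
  using f_closed act_closed by simp

lemma fcomp_free_generator:
  assumes a: "a \<in> carrier H" and b: "b \<in> carrier H" and i: "i \<in> I"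
  shows "free_generator R (HomM C (ob i) (ob (act (a \<otimes>\<^bsub>H\<^esub> b) i)))
    (Hg C (ob i) (ob (act (a \<otimes>\<^bsub>H\<^esub> b) i)) (a \<otimes>\<^bsub>H\<^esub> b)) (fcomp a b i)"
proof -
  interpret H: group H by (rule group)
  from iso_deg_free_generator[OF idm_free_generator_shift[OF rep_closed[OF i]] fcomp_iso[OF a b i]] a b
  show ?thesis by (simp add: act_mult[OF a b i])
qed

text \<open>\<open>cocycle a b (h\<^sub>i L\<^sub>S)\<close> is \<open>\<psi>\<^sub>S(a, b)(h\<^sub>i L\<^sub>S)\<close>; its value on sets that are not left cosets of \<open>L\<^sub>S\<close>
  is unspecified.\<close>

definition cocycle :: "'h \<Rightarrow> 'h \<Rightarrow> 'h set \<Rightarrow> 'r" where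
  "cocycle a b D = (let i = (THE i. i \<in> I \<and> D = l_coset H (hr i) L\<^sub>S) in
     SOME r. r \<in> carrier R \<and> f (a \<otimes>\<^bsub>H\<^esub> b) i = r \<odot>\<^bsub>HomM C (ob i) (ob (act (a \<otimes>\<^bsub>H\<^esub> b) i))\<^esub> fcomp a b i)"

lemma cocycle_coeff:
  assumes a: "a \<in> carrier H" and b: "b \<in> carrier H" and i: "i \<in> I"
  shows "cocycle a b (l_coset H (hr i) L\<^sub>S) \<in> carrier R"
    and "f (a \<otimes>\<^bsub>H\<^esub> b) i =
      cocycle a b (l_coset H (hr i) L\<^sub>S) \<odot>\<^bsub>HomM C (ob i) (ob (act (a \<otimes>\<^bsub>H\<^esub> b) i))\<^esub> fcomp a b i"
proof -
  interpret H: group H by (rule group)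
  have the_rep: "(THE j. j \<in> I \<and> l_coset H (hr i) L\<^sub>S = l_coset H (hr j) L\<^sub>S) = i"
    using i rep_coset_inj by (intro the_equality) auto
  have "\<exists>r. r \<in> carrier R \<and> f (a \<otimes>\<^bsub>H\<^esub> b) i = r \<odot>\<^bsub>HomM C (ob i) (ob (act (a \<otimes>\<^bsub>H\<^esub> b) i))\<^esub> fcomp a b i"
    using free_generator_coeff[OF fcomp_free_generator[OF a b i] free_generator_in[OF f_free_generator[OF i]]]
      a b by (metis H.m_closed)
  from someI_ex[OF this]
  show "cocycle a b (l_coset H (hr i) L\<^sub>S) \<in> carrier R"
    and "f (a \<otimes>\<^bsub>H\<^esub> b) i =
      cocycle a b (l_coset H (hr i) L\<^sub>S) \<odot>\<^bsub>HomM C (ob i) (ob (act (a \<otimes>\<^bsub>H\<^esub> b) i))\<^esub> fcomp a b i"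
    unfolding cocycle_def Let_def the_rep by auto
qed

lemma cocycle_eqI:
  assumes a: "a \<in> carrier H" and b: "b \<in> carrier H" and i: "i \<in> I" and r: "r \<in> carrier R"
    and eq: "f (a \<otimes>\<^bsub>H\<^esub> b) i = r \<odot>\<^bsub>HomM C (ob i) (ob (act (a \<otimes>\<^bsub>H\<^esub> b) i))\<^esub> fcomp a b i"
  shows "cocycle a b (l_coset H (hr i) L\<^sub>S) = r"
  using free_generator_smult_inj[OF fcomp_free_generator[OF a b i] cocycle_coeff(1)[OF a b i] r]
    cocycle_coeff(2)[OF a b i] eq by simp

lemma cocycle_unit:
  assumes a: "a \<in> carrier H" and b: "b \<in> carrier H" and i: "i \<in> I"
  shows "cocycle a b (l_coset H (hr i) L\<^sub>S) \<in> Units R"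
proof -
  interpret H: group H by (rule group)
  show ?thesis
    using free_generator_coeff_unit[OF hom_module _ fcomp_free_generator[OF a b i]
        f_free_generator[OF i H.m_closed[OF a b]] cocycle_coeff[OF a b i]]
      Hg_closed[OF H.m_closed[OF a b]] by blast
qed

lemma cocycle_one_left:
  assumes h: "h \<in> carrier H" and i: "i \<in> I"
  shows "cocycle \<one>\<^bsub>H\<^esub> h (l_coset H (hr i) L\<^sub>S) = \<one>\<^bsub>R\<^esub>"
proof -
  interpret H: group H by (rule group)
  interpret R: cring R by (rule cring)
  have "fcomp \<one>\<^bsub>H\<^esub> h i = f h i"
    using f_one[OF act_closed[OF i h]] f_closed[OF i h] act_one[OF act_closed[OF i h]] by simp
  then show ?thesis
    using cocycle_eqI[OF H.one_closed h i R.one_closed] f_closed[OF i h] module.smult_one[OF hom_module] h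
    by simp
qed

lemma cocycle_one_right:
  assumes h: "h \<in> carrier H" and i: "i \<in> I"
  shows "cocycle h \<one>\<^bsub>H\<^esub> (l_coset H (hr i) L\<^sub>S) = \<one>\<^bsub>R\<^esub>"
proof -
  interpret H: group H by (rule group)
  interpret R: cring R by (rule cring)
  have "fcomp h \<one>\<^bsub>H\<^esub> i = f h i"
    using f_one[OF i] f_closed[OF i h] act_one[OF i] by simp
  then show ?thesis
    using cocycle_eqI[OF h H.one_closed i R.one_closed] f_closed[OF i h] module.smult_one[OF hom_module] h
      act_one[OF i] by simp
qed

abbreviation fcomp3 :: "'h \<Rightarrow> 'h \<Rightarrow> 'h \<Rightarrow> 'i \<Rightarrow> 'm" where
  "fcomp3 a b c i \<equiv> cmp C (ob i) (ob (act c i)) (ob (act a (act b (act c i)))) (fcomp a b (act c i)) (f c i)"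

lemma f_triple_left:
  assumes a: "a \<in> carrier H" and b: "b \<in> carrier H" and c: "c \<in> carrier H" and i: "i \<in> I"
  shows "f (a \<otimes>\<^bsub>H\<^esub> b \<otimes>\<^bsub>H\<^esub> c) i =
    (cocycle (a \<otimes>\<^bsub>H\<^esub> b) c (l_coset H (hr i) L\<^sub>S) \<otimes>\<^bsub>R\<^esub> cocycle a b (l_coset H (hr (act c i)) L\<^sub>S))
      \<odot>\<^bsub>HomM C (ob i) (ob (act a (act b (act c i))))\<^esub> fcomp3 a b c i"
proof -
  interpret H: group H by (rule group)
  interpret M: module R "HomM C (ob i) (ob (act a (act b (act c i))))" by (rule hom_module)
  let ?p = "cocycle (a \<otimes>\<^bsub>H\<^esub> b) c (l_coset H (hr i) L\<^sub>S)"
  let ?q = "cocycle a b (l_coset H (hr (act c i)) L\<^sub>S)"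
  have ci: "act c i \<in> I" using act_closed[OF i c] .
  have p: "?p \<in> carrier R" and q: "?q \<in> carrier R"
    using cocycle_coeff(1) a b c i ci by simp_all
  have "f (a \<otimes>\<^bsub>H\<^esub> b \<otimes>\<^bsub>H\<^esub> c) i = ?p \<odot>\<^bsub>HomM C (ob i) (ob (act a (act b (act c i))))\<^esub>
      cmp C (ob i) (ob (act c i)) (ob (act a (act b (act c i)))) (f (a \<otimes>\<^bsub>H\<^esub> b) (act c i)) (f c i)"
    using cocycle_coeff(2)[OF H.m_closed[OF a b] c i] a b c i ci by (simp add: act_mult act_closed)
  also have "f (a \<otimes>\<^bsub>H\<^esub> b) (act c i) = ?q \<odot>\<^bsub>HomM C (ob (act c i)) (ob (act a (act b (act c i))))\<^esub> fcomp a b (act c i)"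
    using cocycle_coeff(2)[OF a b ci] a b ci by (simp add: act_mult)
  also have "cmp C (ob i) (ob (act c i)) (ob (act a (act b (act c i))))
      (?q \<odot>\<^bsub>HomM C (ob (act c i)) (ob (act a (act b (act c i))))\<^esub> fcomp a b (act c i)) (f c i) =
      ?q \<odot>\<^bsub>HomM C (ob i) (ob (act a (act b (act c i))))\<^esub> fcomp3 a b c i"
    using cmp_smult_left[OF f_closed[OF i c] fcomp_closed[OF a b ci] q] .
  finally show ?thesis
    using M.smult_assoc1[OF p q] fcomp_closed[OF a b ci] f_closed[OF i c] by simp
qed

lemma f_triple_right:
  assumes a: "a \<in> carrier H" and b: "b \<in> carrier H" and c: "c \<in> carrier H" and i: "i \<in> I"
  shows "f (a \<otimes>\<^bsub>H\<^esub> (b \<otimes>\<^bsub>H\<^esub> c)) i =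
    (cocycle a (b \<otimes>\<^bsub>H\<^esub> c) (l_coset H (hr i) L\<^sub>S) \<otimes>\<^bsub>R\<^esub> cocycle b c (l_coset H (hr i) L\<^sub>S))
      \<odot>\<^bsub>HomM C (ob i) (ob (act a (act b (act c i))))\<^esub> fcomp3 a b c i"
proof -
  interpret H: group H by (rule group)
  interpret M: module R "HomM C (ob i) (ob (act a (act b (act c i))))" by (rule hom_module)
  let ?p = "cocycle a (b \<otimes>\<^bsub>H\<^esub> c) (l_coset H (hr i) L\<^sub>S)"
  let ?q = "cocycle b c (l_coset H (hr i) L\<^sub>S)"
  let ?k = "act b (act c i)"
  have ci: "act c i \<in> I" and k: "?k \<in> I" using act_closed i b c by blast+
  have p: "?p \<in> carrier R" and q: "?q \<in> carrier R"
    using cocycle_coeff(1) a b c i by simp_all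
  have fa: "f a ?k \<in> carrier (HomM C (ob ?k) (ob (act a ?k)))" using f_closed[OF k a] .
  have "f (a \<otimes>\<^bsub>H\<^esub> (b \<otimes>\<^bsub>H\<^esub> c)) i = ?p \<odot>\<^bsub>HomM C (ob i) (ob (act a ?k))\<^esub>
      cmp C (ob i) (ob ?k) (ob (act a ?k)) (f a ?k) (f (b \<otimes>\<^bsub>H\<^esub> c) i)"
    using cocycle_coeff(2)[OF a H.m_closed[OF b c] i] a b c i by (simp add: act_mult act_closed)
  also have "f (b \<otimes>\<^bsub>H\<^esub> c) i = ?q \<odot>\<^bsub>HomM C (ob i) (ob ?k)\<^esub> fcomp b c i"
    using cocycle_coeff(2)[OF b c i] b c i by (simp add: act_mult)
  also have "cmp C (ob i) (ob ?k) (ob (act a ?k)) (f a ?k) (?q \<odot>\<^bsub>HomM C (ob i) (ob ?k)\<^esub> fcomp b c i) =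
      ?q \<odot>\<^bsub>HomM C (ob i) (ob (act a ?k))\<^esub> cmp C (ob i) (ob ?k) (ob (act a ?k)) (f a ?k) (fcomp b c i)"
    using cmp_smult_right[OF fcomp_closed[OF b c i] fa q] .
  also have "cmp C (ob i) (ob ?k) (ob (act a ?k)) (f a ?k) (fcomp b c i) = fcomp3 a b c i"
    using cmp_assoc[OF f_closed[OF i c] f_closed[OF ci b] fa] .
  finally show ?thesis
    using M.smult_assoc1[OF p q] fcomp_closed[OF a b ci] f_closed[OF i c] by simp
qed

lemma cocycle_mult_identity:
  assumes a: "a \<in> carrier H" and b: "b \<in> carrier H" and c: "c \<in> carrier H" and i: "i \<in> I"
  shows "cocycle (a \<otimes>\<^bsub>H\<^esub> b) c (l_coset H (hr i) L\<^sub>S) \<otimes>\<^bsub>R\<^esub> cocycle a b (l_coset H (hr (act c i)) L\<^sub>S) =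
    cocycle a (b \<otimes>\<^bsub>H\<^esub> c) (l_coset H (hr i) L\<^sub>S) \<otimes>\<^bsub>R\<^esub> cocycle b c (l_coset H (hr i) L\<^sub>S)"
proof -
  interpret H: group H by (rule group)
  interpret R: cring R by (rule cring)
  have ci: "act c i \<in> I" using act_closed[OF i c] .
  have "iso_deg C (a \<otimes>\<^bsub>H\<^esub> b \<otimes>\<^bsub>H\<^esub> c) (ob i) (ob (act a (act b (act c i)))) (fcomp3 a b c i)"
    using iso_deg_cmp[OF f_iso[OF i c] fcomp_iso[OF a b ci]] a b c by simp
  from iso_deg_free_generator[OF idm_free_generator_shift[OF rep_closed[OF i]] this] a b c
  have gen: "free_generator R (HomM C (ob i) (ob (act a (act b (act c i)))))
      (Hg C (ob i) (ob (act a (act b (act c i)))) (a \<otimes>\<^bsub>H\<^esub> b \<otimes>\<^bsub>H\<^esub> c)) (fcomp3 a b c i)"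
    by simp
  have "f (a \<otimes>\<^bsub>H\<^esub> b \<otimes>\<^bsub>H\<^esub> c) i = f (a \<otimes>\<^bsub>H\<^esub> (b \<otimes>\<^bsub>H\<^esub> c)) i" using a b c by (simp add: H.m_assoc)
  then show ?thesis
    using free_generator_smult_inj[OF gen] f_triple_left[OF a b c i] f_triple_right[OF a b c i]
      cocycle_coeff(1) a b c i ci by simp
qed

lemma cocycle_condition:
  assumes a: "a \<in> carrier H" and b: "b \<in> carrier H" and c: "c \<in> carrier H" and i: "i \<in> I"
  shows "cocycle b c (l_coset H (hr i) L\<^sub>S) \<otimes>\<^bsub>R\<^esub> inv\<^bsub>R\<^esub> (cocycle (a \<otimes>\<^bsub>H\<^esub> b) c (l_coset H (hr i) L\<^sub>S))
    \<otimes>\<^bsub>R\<^esub> cocycle a (b \<otimes>\<^bsub>H\<^esub> c) (l_coset H (hr i) L\<^sub>S)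
    \<otimes>\<^bsub>R\<^esub> inv\<^bsub>R\<^esub> (cocycle a b (l_coset H c (l_coset H (hr i) L\<^sub>S))) = \<one>\<^bsub>R\<^esub>"
proof -
  interpret H: group H by (rule group)
  interpret R: cring R by (rule cring)
  show ?thesis
    unfolding l_coset_act[OF i c]
    by (rule R.Units_cross_ratio_eq_one[OF cocycle_unit[OF b c i] cocycle_unit[OF H.m_closed[OF a b] c i]
          cocycle_unit[OF a H.m_closed[OF b c] i] cocycle_unit[OF a b act_closed[OF i c]]
          cocycle_mult_identity[OF a b c i]])
qed

lemma cocycle_normalised_2cocycle: "normalised_2cocycle R H L\<^sub>S cocycle"
  unfolding normalised_2cocycle_def left_cosets_of_reps
  using cocycle_unit cocycle_one_left cocycle_one_right cocycle_condition by auto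

lemma cocycle_relation_cocycle: "cocycle_relation f cocycle"
  using cocycle_coeff(2) by blast

lemma unit_valued_cocycle: "unit_valued cocycle"
  unfolding left_cosets_of_reps using cocycle_unit by blast

lemma cocycle_unique:
  assumes "cocycle_relation f \<psi>" and "unit_valued \<psi>"
    and a: "a \<in> carrier H" and b: "b \<in> carrier H" and D: "D \<in> left_cosets_of H L\<^sub>S"
  shows "\<psi> a b D = cocycle a b D"
proof -
  obtain i where i: "i \<in> I" and D_eq: "D = l_coset H (hr i) L\<^sub>S" using D unfolding left_cosets_of_reps by blast
  have "\<psi> a b D \<in> carrier R" using assms(2) a b D unfolding Units_def by blast
  then show ?thesis using cocycle_eqI[OF a b i] assms(1) a b i D_eq by simp
qed

end

context shift_orbit
begin

lemma unique_normalised_cocycle: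
  assumes "normalised_generators f"
  shows "\<exists>\<psi>. cocycle_relation f \<psi> \<and> unit_valued \<psi> \<and>
    (\<forall>\<psi>'. cocycle_relation f \<psi>' \<and> unit_valued \<psi>' \<longrightarrow>
      (\<forall>a\<in>carrier H. \<forall>b\<in>carrier H. \<forall>D\<in>left_cosets_of H L\<^sub>S. \<psi>' a b D = \<psi> a b D)) \<and>
    normalised_2cocycle R H L\<^sub>S \<psi>"
proof -
  interpret generator_family R H G \<tau> C sh rs S I hr f
    using assms by unfold_locales auto
  show ?thesis
    using cocycle_relation_cocycle unit_valued_cocycle cocycle_unique cocycle_normalised_2cocycle by blast
qed

end

theorem mainTheorem9:
  fixes R :: "('r, 'a) ring_scheme" and H :: "('h, 'b) monoid_scheme"
    and G :: "('g, 'c) monoid_scheme" and \<tau> :: "'h \<Rightarrow> 'g"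
    and C :: "('o, 'm, 'r, 'h, 'g, 'z) gcat_scheme"
    and sh :: "'o \<Rightarrow> 'h \<Rightarrow> 'o" and rs :: "'o \<Rightarrow> 'h \<Rightarrow> 'm" and S :: 'o
  assumes "cring R" and "\<one>\<^bsub>R\<^esub> \<noteq> \<zero>\<^bsub>R\<^esub>"
    and "group H" and "group G" and "\<tau> \<in> hom H G"
    and "tau_graded_cat R H G \<tau> C"
    and "has_shifts H C sh rs"
    and "S \<in> Hmg C" and "simple_obj R H C S"
  shows "subgroup (stab H C sh S) H \<and> stab H C sh S \<subseteq> kernel H G \<tau> \<and>
    (\<forall>(I :: 'i set) hr. coset_reps H (stab H C sh S) I hr \<longrightarrow>
      (let L = stab H C sh S; act = coset_act H L I hr;
           M = (\<lambda>i j. HomM C (sh S (hr i)) (sh S (hr j)));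
           Hom = (\<lambda>a i j. Hg C (sh S (hr i)) (sh S (hr j)) a) in
       (\<forall>i\<in>I. \<forall>a\<in>carrier H. \<exists>g. free_generator R (M i (act a i)) (Hom a i (act a i)) g) \<and>
       (\<forall>f. (\<forall>i\<in>I. \<forall>a\<in>carrier H. free_generator R (M i (act a i)) (Hom a i (act a i)) (f a i)) \<and>
            (\<forall>i\<in>I. f \<one>\<^bsub>H\<^esub> i = idm C (sh S (hr i))) \<longrightarrow>
         (\<exists>\<psi>. (\<forall>a\<in>carrier H. \<forall>b\<in>carrier H. \<forall>i\<in>I.
                  f (a \<otimes>\<^bsub>H\<^esub> b) i = \<psi> a b (l_coset H (hr i) L) \<odot>\<^bsub>M i (act (a \<otimes>\<^bsub>H\<^esub> b) i)\<^esub>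
                     cmp C (sh S (hr i)) (sh S (hr (act b i))) (sh S (hr (act a (act b i))))
                       (f a (act b i)) (f b i)) \<and>
               (\<forall>a\<in>carrier H. \<forall>b\<in>carrier H. \<forall>D\<in>left_cosets_of H L. \<psi> a b D \<in> Units R) \<and>
               (\<forall>\<psi>'. ((\<forall>a\<in>carrier H. \<forall>b\<in>carrier H. \<forall>i\<in>I.
                  f (a \<otimes>\<^bsub>H\<^esub> b) i = \<psi>' a b (l_coset H (hr i) L) \<odot>\<^bsub>M i (act (a \<otimes>\<^bsub>H\<^esub> b) i)\<^esub>
                     cmp C (sh S (hr i)) (sh S (hr (act b i))) (sh S (hr (act a (act b i))))
                       (f a (act b i)) (f b i)) \<and>
                  (\<forall>a\<in>carrier H. \<forall>b\<in>carrier H. \<forall>D\<in>left_cosets_of H L. \<psi>' a b D \<in> Units R)) \<longrightarrow>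
                  (\<forall>a\<in>carrier H. \<forall>b\<in>carrier H. \<forall>D\<in>left_cosets_of H L. \<psi>' a b D = \<psi> a b D)) \<and>
               normalised_2cocycle R H L \<psi>))))"
proof -
  interpret graded_simple_object R H G \<tau> C sh rs S
    using assms by (intro graded_simple_object.intro graded_simple_object_axioms.intro tau_graded_category.intro)
  have orbit: "shift_orbit R H G \<tau> C sh rs S I hr"
    if "coset_reps H (stab H C sh S) I hr" for I :: "'i set" and hr
    using that graded_simple_object_axioms stab_subgroup group
    by (intro shift_orbit.intro coset_representatives.intro)
  show ?thesis
    unfolding Let_def
    using stab_subgroup stab_subset_kernel shift_orbit.orbit_free_generator_exists[OF orbit]
      shift_orbit.unique_normalised_cocycle[OF orbit]
    by blast
qed

end
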